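(* Fix $\nu>0$. (a) $L(\nu/\mu,\mu)\to E(\nu)$ as $\mu\to\infty$, and $\mathrm{L}(\nu/\lambda,\lambda)\to E(\nu)$ as $\lambda\to\infty$. (b) $\mathrm{Ssi}(\nu/\lambda,\lambda)\to\mathrm{Si}(\nu)$ as $\lambda\to\infty$. (c) $\lambda\,\mathrm{Eci}(\nu/\lambda,\lambda)\to i(1-e^{i\nu})$ as $\lambda\to\infty$.
   Context: $L(x,\mu)=\sum_{k=1}^\infty \frac{e^{ikx}}{k+\mu}$; $\mathrm{L}(x,\lambda)=e^{-ix}L\left(2x,\frac{\lambda-1}{2}\right)$; $E(t)=\int_0^\infty\frac{e^{iu}}{u+t}\,du$ for $t>0$; $\mathrm{Si}(t)=\int_0^t\frac{\sin u}{u}\,du$; $\mathrm{Ssi}(x,\lambda)=\int_0^x\frac{\sin\lambda t}{\sin t}\,dt$; $\mathrm{Eci}(x,\lambda)=\int_0^x\frac{e^{it\lambda}}{\cos t}\,dt$. *)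

theory Defs
  imports "HOL-Analysis.Analysis" "HOL-Probability.Sinc_Integral"
begin

definition Lser :: "real \<Rightarrow> real \<Rightarrow> complex" where
  "Lser x \<mu> = (\<Sum>k. exp (\<i> * of_real (real (Suc k) * x)) / of_real (real (Suc k) + \<mu>))"

definition Lbold :: "real \<Rightarrow> real \<Rightarrow> complex" where
  "Lbold x lam = exp (- \<i> * of_real x) * Lser (2 * x) ((lam - 1) / 2)"

text \<open>E(t) = int_0^infty e^{iu}/(u+t) du, an improper (conditionally convergent) integral.\<close>
definition Eint :: "real \<Rightarrow> complex" where
  "Eint t = Lim at_top (\<lambda>R. integral {0..R} (\<lambda>u. exp (\<i> * of_real u) / of_real (u + t)))"

definition Ssi :: "real \<Rightarrow> real \<Rightarrow> real" where
  "Ssi x lam = integral {0..x} (\<lambda>t. sin (lam * t) / sin t)"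

definition Eci :: "real \<Rightarrow> real \<Rightarrow> complex" where
  "Eci x lam = integral {0..x} (\<lambda>t. exp (\<i> * of_real (t * lam)) / of_real (cos t))"

end

theory Submission
  imports Defs "HOL-Real_Asymp.Real_Asymp"
begin

(* Substituting t = s / lam turns Ssi (nu / lam) lam and lam * Eci (nu / lam) lam into integrals over
   [0, nu] of sinc s / sinc (s / lam) and e^(i s) / cos (s / lam); these integrands converge uniformly
   to sinc s and e^(i s), with error at most (nu / lam)^2.

   For L, the identity x e^(i k x) = c x * (integral of e^(i u) over [(k - 1) x, k x]), where
   c x = i x / (1 - e^(- i x)) tends to 1, exhibits L (x, mu) / c x as a Riemann sum with step x for
   the improper integral E (mu x). Since 1 / (u + mu x) decreases, the errors of the cells telescope
   to at most 1 / mu. As E is locally Lipschitz on (0, oo), L (x, mu) tends to E nu whenever x -> 0+,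
   mu -> oo and mu x -> nu; both limits in (a) are instances of this. *)

lemma abs_cos_minus_1_le:
  fixes x :: real
  shows "\<bar>cos x - 1\<bar> \<le> x^2 / 2"
proof -
  have "sin (x/2)^2 \<le> (x/2)^2"
    using abs_sin_x_le_abs_x[of "x/2"] by (metis abs_ge_zero power2_abs power_mono)
  then show ?thesis using cos_double_sin[of "x/2"] by (simp add: power_divide)
qed

lemma abs_sinc_minus_1_le: "\<bar>sinc x - 1\<bar> \<le> x^2 / 6"
proof (cases "x = 0")
  case False
  have "\<bar>sin x - x\<bar> \<le> \<bar>x\<bar>^3 / 6"
    using Maclaurin_sin_bound[of x 3] by (simp add: sin_coeff_def numeral_3_eq_3 fact_numeral)
  then have "\<bar>sin x - x\<bar> / \<bar>x\<bar> \<le> x^2 / 6"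
    using False by (simp add: divide_le_eq power2_eq_square power3_eq_cube)
  moreover have "sin x / x - 1 = (sin x - x) / x" using False by (simp add: field_simps)
  ultimately show ?thesis using False by (simp add: abs_divide)
qed simp

lemma abs_sinc_le_1: "\<bar>sinc x\<bar> \<le> 1"
  using abs_sin_x_le_abs_x[of x] by (cases "x = 0") (auto simp: abs_divide divide_le_eq_1)

lemma abs_inverse_minus_1_le:
  fixes b t :: real
  assumes "\<bar>b - 1\<bar> \<le> t" "t \<le> 1/2"
  shows "\<bar>1 / b - 1\<bar> \<le> 2 * t"
proof -
  have b: "b \<ge> 1/2" using assms by linarith
  have "\<bar>1 / b - 1\<bar> = \<bar>b - 1\<bar> / b" using b by (simp add: field_simps abs_divide abs_minus_commute)
  also have "\<dots> \<le> t / (1/2)" using assms b by (intro frac_le) auto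
  finally show ?thesis by simp
qed

lemma integral_rescale:
  fixes g :: "real \<Rightarrow> 'a::real_normed_vector"
  assumes "m > 0"
  shows "integral {0..b/m} g = (1/m) *\<^sub>R integral {0..b} (\<lambda>s. g (s/m))"
  using integral_stretch_real[of m 0 b "\<lambda>s. g (s/m)"] assms
  by (simp add: image_divide_atLeastAtMost)

lemma tendsto_integral_if_uniform_bound:
  fixes f :: "'i \<Rightarrow> real \<Rightarrow> 'a::banach"
  assumes "a \<le> b" and f: "\<forall>\<^sub>F n in F. f n integrable_on {a..b}" and g: "g integrable_on {a..b}"
    and bound: "\<forall>\<^sub>F n in F. \<forall>s\<in>{a..b}. norm (f n s - g s) \<le> e n" and e: "(e \<longlongrightarrow> 0) F"
  shows "((\<lambda>n. integral {a..b} (f n)) \<longlongrightarrow> integral {a..b} g) F"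
proof -
  have "((\<lambda>n. integral {a..b} (f n) - integral {a..b} g) \<longlongrightarrow> 0) F"
  proof (rule Lim_null_comparison)
    show "\<forall>\<^sub>F n in F. norm (integral {a..b} (f n) - integral {a..b} g) \<le> (b - a) * e n"
      using f bound
    proof eventually_elim
      case (elim n)
      have "norm (integral {a..b} (\<lambda>s. f n s - g s)) \<le> integral {a..b} (\<lambda>s. e n)"
        using elim g by (intro integral_norm_bound_integral integrable_diff) auto
      with elim g \<open>a \<le> b\<close> show ?case by (simp add: integral_diff)
    qed
    show "((\<lambda>n. (b - a) * e n) \<longlongrightarrow> 0) F"
      using tendsto_mult_right_zero[OF e] by simp
  qed
  then show ?thesis by (simp add: Lim_null[symmetric])
qed

lemma tendsto_integral_divide_scaled:
  fixes f :: "real \<Rightarrow> 'a::{real_normed_field,banach}" and q :: "real \<Rightarrow> real"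
  assumes "0 \<le> \<nu>" and f: "continuous_on {0..\<nu>} f" "\<And>s. s \<in> {0..\<nu>} \<Longrightarrow> norm (f s) \<le> 1"
    and q: "continuous_on UNIV q" "\<And>y. \<bar>q y - 1\<bar> \<le> y^2 / 2"
  shows "((\<lambda>lam. integral {0..\<nu>} (\<lambda>s. f s / of_real (q (s / lam)))) \<longlongrightarrow> integral {0..\<nu>} f) at_top"
proof (rule tendsto_integral_if_uniform_bound)
  have small: "(s / lam)^2 \<le> (\<nu> / lam)^2 \<and> (\<nu> / lam)^2 \<le> 1" if "\<nu> \<le> lam" "0 < lam" "s \<in> {0..\<nu>}" for lam s
    using that by (auto intro!: power_mono divide_right_mono simp: power_le_one)
  have close: "\<bar>1 / q (s / lam) - 1\<bar> \<le> (\<nu> / lam)^2" if "\<nu> \<le> lam" "0 < lam" "s \<in> {0..\<nu>}" for lam s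
    using abs_inverse_minus_1_le[OF q(2)[of "s / lam"]] small[OF that] by simp
  show "\<forall>\<^sub>F lam in at_top. (\<lambda>s. f s / of_real (q (s / lam))) integrable_on {0..\<nu>}"
    using eventually_ge_at_top[of \<nu>] eventually_gt_at_top[of 0]
  proof eventually_elim
    case (elim lam)
    have "q (s / lam) \<noteq> 0" if "s \<in> {0..\<nu>}" for s
      using q(2)[of "s / lam"] small[OF elim that] by auto
    then show ?case
      using elim by (intro integrable_continuous_real continuous_intros f continuous_on_compose2[OF q(1)]) auto
  qed
  have bound: "norm (f s / of_real (q (s / lam)) - f s) \<le> (\<nu> / lam)^2"
    if "\<nu> \<le> lam" "0 < lam" "s \<in> {0..\<nu>}" for lam s
  proof -
    have "f s / of_real (q (s / lam)) - f s = f s * of_real (1 / q (s / lam) - 1)"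
      by (simp add: divide_inverse algebra_simps)
    then have "norm (f s / of_real (q (s / lam)) - f s) = norm (f s) * \<bar>1 / q (s / lam) - 1\<bar>"
      by (simp only: norm_mult norm_of_real)
    also have "\<dots> \<le> 1 * (\<nu> / lam)^2"
      using f(2) close that by (intro mult_mono) auto
    finally show ?thesis by simp
  qed
  show "\<forall>\<^sub>F lam in at_top. \<forall>s\<in>{0..\<nu>}. norm (f s / of_real (q (s / lam)) - f s) \<le> (\<nu> / lam)^2"
    using eventually_ge_at_top[of \<nu>] eventually_gt_at_top[of 0] by eventually_elim (blast intro: bound)
  have "((\<lambda>lam. \<nu> / lam) \<longlongrightarrow> 0) at_top"
    by (intro tendsto_divide_0[OF tendsto_const] filterlim_at_top_imp_at_infinity filterlim_ident)
  from tendsto_power[OF this, of 2] show "((\<lambda>lam. (\<nu> / lam)^2) \<longlongrightarrow> 0) at_top" by simp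
qed (use assms in \<open>auto intro: integrable_continuous_real\<close>)

lemma tendsto_integral_at_top_if_tail_bound:
  fixes f :: "real \<Rightarrow> 'a::banach"
  assumes int: "\<And>b. f integrable_on {a..b}"
    and tail: "\<And>r s. a \<le> r \<Longrightarrow> r \<le> s \<Longrightarrow> norm (integral {r..s} f) \<le> B r"
    and B: "(B \<longlongrightarrow> 0) at_top"
  shows "((\<lambda>R. integral {a..R} f) \<longlongrightarrow> Lim at_top (\<lambda>R. integral {a..R} f)) at_top"
proof -
  define I where "I R = integral {a..R} f" for R
  have increment: "I s - I r = integral {r..s} f" if "a \<le> r" "r \<le> s" for r s
    using Henstock_Kurzweil_Integration.integral_combine[OF that int] unfolding I_def
    by (simp add: algebra_simps)
  have "cauchy_filter (filtermap I at_top)"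
    unfolding cauchy_filter_metric_filtermap
  proof (intro allI impI)
    fix e :: real assume "e > 0"
    then have "\<forall>\<^sub>F r in at_top. a \<le> r \<and> B r < e / 2"
      by (intro eventually_conj eventually_ge_at_top order_tendstoD(2)[OF B]) simp
    then obtain r where r: "a \<le> r" "B r < e / 2"
      by (auto simp: eventually_at_top_linorder)
    have "dist (I s) (I s') < e" if "r \<le> s" "r \<le> s'" for s s'
    proof -
      have "dist (I s) (I s') \<le> norm (I s - I r) + norm (I s' - I r)"
        using dist_triangle2[of "I s" "I s'" "I r"] by (simp add: dist_norm)
      also have "\<dots> \<le> B r + B r"
        using that r by (intro add_mono) (simp_all add: increment tail)
      finally show ?thesis using r by simp
    qed
    then show "\<exists>P. eventually P at_top \<and> (\<forall>s s'. P s \<and> P s' \<longrightarrow> dist (I s) (I s') < e)"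
      by (intro exI[of _ "\<lambda>s. r \<le> s"]) (auto simp: eventually_ge_at_top)
  qed
  then obtain c where "(I \<longlongrightarrow> c) at_top"
    using cauchy_filter_complete_converges[OF _ complete_UNIV, of "filtermap I at_top"]
    by (auto simp: filtermap_bot_iff filterlim_def)
  then show ?thesis unfolding I_def[abs_def] by (simp add: tendsto_Lim)
qed

lemma has_integral_cis:
  "((\<lambda>u. exp (\<i> * of_real u)) has_integral \<i> * (exp (\<i> * of_real a) - exp (\<i> * of_real b))) {a..b}"
  if "a \<le> b"
proof -
  have "((\<lambda>u. exp (\<i> * of_real u)) has_integral (-\<i> * exp (\<i> * of_real b) - (-\<i> * exp (\<i> * of_real a)))) {a..b}"
  proof (rule fundamental_theorem_of_calculus[OF that])
    fix x :: real
    have "((\<lambda>z. -\<i> * exp (\<i> * z)) has_field_derivative exp (\<i> * of_real x)) (at (of_real x))"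
      by (auto intro!: derivative_eq_intros simp: algebra_simps)
    from has_vector_derivative_real_field[OF this]
    show "((\<lambda>u. -\<i> * exp (\<i> * of_real u)) has_vector_derivative exp (\<i> * of_real x)) (at x within {a..b})" .
  qed
  then show ?thesis by (simp add: algebra_simps)
qed

lemma has_integral_inverse_square:
  fixes t r s :: real
  assumes "0 < r + t" "r \<le> s"
  shows "((\<lambda>u. 1 / (u + t)^2) has_integral (1 / (r + t) - 1 / (s + t))) {r..s}"
proof -
  have "((\<lambda>u. 1 / (u + t)^2) has_integral (- 1 / (s + t) - - 1 / (r + t))) {r..s}"
  proof (rule fundamental_theorem_of_calculus[OF assms(2)])
    fix u assume "u \<in> {r..s}"
    then have "u + t \<noteq> 0" using assms by auto
    then have "((\<lambda>u. - 1 / (u + t)) has_real_derivative 1 / (u + t)^2) (at u)"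
      by (auto intro!: derivative_eq_intros simp: power2_eq_square)
    then show "((\<lambda>u. - 1 / (u + t)) has_vector_derivative 1 / (u + t)^2) (at u within {r..s})"
      by (simp add: has_real_derivative_iff_has_vector_derivative[symmetric] has_field_derivative_at_within)
  qed
  then show ?thesis by simp
qed

lemma integral_sum_cells:
  fixes f :: "real \<Rightarrow> 'a::banach"
  assumes "0 \<le> x" "\<And>b. f integrable_on {0..b}"
  shows "(\<Sum>k<N. integral {real k * x..real (Suc k) * x} f) = integral {0..real N * x} f"
proof (induction N)
  case (Suc N)
  have "integral {0..real N * x} f + integral {real N * x..real (Suc N) * x} f = integral {0..real (Suc N) * x} f"
    using assms by (intro Henstock_Kurzweil_Integration.integral_combine) (auto intro: mult_right_mono)
  with Suc show ?case by simp
qed simp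

lemma Si_eq_integral: "0 \<le> x \<Longrightarrow> Si x = integral {0..x} sinc"
proof -
  assume "0 \<le> x"
  have "(sinc has_integral Si x - Si 0) {0..x}"
  proof (rule fundamental_theorem_of_calculus[OF \<open>0 \<le> x\<close>])
    fix t show "(Si has_vector_derivative sinc t) (at t within {0..x})"
      using has_field_derivative_at_within[OF DERIV_Si[of t]]
      unfolding has_real_derivative_iff_has_vector_derivative .
  qed
  moreover have "Si 0 = 0" by (simp add: Si_def zero_ereal_def)
  ultimately show ?thesis by (simp add: integral_unique)
qed

section \<open>The integrals Ssi and Eci near the origin\<close>

lemma Ssi_scaled_eq_integral:
  assumes "lam > 0"
  shows "Ssi (\<nu> / lam) lam = integral {0..\<nu>} (\<lambda>s. sinc s / sinc (s / lam))"
proof -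
  have "Ssi (\<nu> / lam) lam = (1/lam) *\<^sub>R integral {0..\<nu>} (\<lambda>s. sin (lam * (s/lam)) / sin (s/lam))"
    unfolding Ssi_def by (rule integral_rescale[OF assms])
  also have "\<dots> = integral {0..\<nu>} (\<lambda>s. (1/lam) *\<^sub>R (sin (lam * (s/lam)) / sin (s/lam)))"
    by (rule integral_cmul[symmetric])
  also have "\<dots> = integral {0..\<nu>} (\<lambda>s. sinc s / sinc (s / lam))"
    \<comment> \<open>they differ only at s = 0, where the left integrand is the junk value 0 / 0 = 0\<close>
    by (rule integral_spike[of "{0}"]) (use assms in auto)
  finally show ?thesis .
qed

lemma Eci_scaled_eq_integral:
  assumes "lam > 0"
  shows "of_real lam * Eci (\<nu> / lam) lam = integral {0..\<nu>} (\<lambda>s. exp (\<i> * of_real s) / of_real (cos (s / lam)))"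
  unfolding Eci_def
  using integral_rescale[OF assms, of \<nu> "\<lambda>t. exp (\<i> * of_real (t * lam)) / of_real (cos t)"] assms
  by (simp add: scaleR_conv_of_real)

lemma Ssi_scaled_tendsto_Si:
  assumes "\<nu> > 0"
  shows "((\<lambda>lam. Ssi (\<nu> / lam) lam) \<longlongrightarrow> Si \<nu>) at_top"
proof -
  have "\<bar>sinc y - 1\<bar> \<le> y^2 / 2" for y
    by (rule order_trans[OF abs_sinc_minus_1_le]) simp
  then have "((\<lambda>lam. integral {0..\<nu>} (\<lambda>s. sinc s / of_real (sinc (s / lam)))) \<longlongrightarrow> integral {0..\<nu>} sinc) at_top"
    using assms abs_sinc_le_1
    by (intro tendsto_integral_divide_scaled) (auto intro: continuous_at_imp_continuous_on isCont_sinc)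
  moreover have "\<forall>\<^sub>F lam in at_top. integral {0..\<nu>} (\<lambda>s. sinc s / of_real (sinc (s / lam))) = Ssi (\<nu> / lam) lam"
    using eventually_gt_at_top[of 0] by eventually_elim (simp add: Ssi_scaled_eq_integral)
  ultimately show ?thesis
    using Si_eq_integral assms by (auto intro: Lim_transform_eventually)
qed

lemma Eci_scaled_tendsto:
  assumes "\<nu> > 0"
  shows "((\<lambda>lam. of_real lam * Eci (\<nu> / lam) lam) \<longlongrightarrow> \<i> * (1 - exp (\<i> * of_real \<nu>))) at_top"
proof -
  have "((\<lambda>lam. integral {0..\<nu>} (\<lambda>s. exp (\<i> * of_real s) / of_real (cos (s / lam))))
      \<longlongrightarrow> integral {0..\<nu>} (\<lambda>s. exp (\<i> * of_real s))) at_top"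
    using assms abs_cos_minus_1_le
    by (intro tendsto_integral_divide_scaled continuous_intros) (auto simp: norm_exp_i_times)
  moreover have "\<forall>\<^sub>F lam in at_top. integral {0..\<nu>} (\<lambda>s. exp (\<i> * of_real s) / of_real (cos (s / lam)))
      = of_real lam * Eci (\<nu> / lam) lam"
    using eventually_gt_at_top[of 0] by eventually_elim (simp add: Eci_scaled_eq_integral)
  ultimately show ?thesis
    using integral_unique[OF has_integral_cis[of 0 \<nu>]] assms by (auto intro: Lim_transform_eventually)
qed

section \<open>The improper integral E\<close>

definition E_kernel :: "real \<Rightarrow> real \<Rightarrow> complex" where
  "E_kernel t u = exp (\<i> * of_real u) / of_real (u + t)"

lemma Eint_eq_Lim: "Eint t = Lim at_top (\<lambda>R. integral {0..R} (E_kernel t))"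
  unfolding Eint_def E_kernel_def ..

lemma continuous_on_E_kernel: "0 < t \<Longrightarrow> 0 \<le> a \<Longrightarrow> continuous_on {a..b} (E_kernel t)"
  unfolding E_kernel_def by (intro continuous_intros) (auto simp flip: of_real_add)

lemma norm_E_kernel: "0 < u + t \<Longrightarrow> norm (E_kernel t u) = 1 / (u + t)"
  by (simp add: E_kernel_def norm_divide del: of_real_add)

lemma integral_E_kernel_by_parts:
  assumes "0 < t" "0 \<le> r" "r \<le> s"
  shows "integral {r..s} (E_kernel t)
    = \<i> * (E_kernel t r - E_kernel t s) - integral {r..s} (\<lambda>u. \<i> * E_kernel t u / of_real (u + t))"
proof -
  define h where "h u = \<i> * E_kernel t u / of_real (u + t)" for u
  have "((\<lambda>u. E_kernel t u + h u) has_integral (- \<i> * E_kernel t s - - \<i> * E_kernel t r)) {r..s}"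
  proof (rule fundamental_theorem_of_calculus[OF assms(3)])
    fix u assume "u \<in> {r..s}"
    then have "u + t > 0" using assms by auto
    then have nz: "of_real u + of_real t \<noteq> (0::complex)"
      by (metis of_real_add of_real_eq_0_iff less_irrefl)
    have "((\<lambda>z. - \<i> * exp (\<i> * z) / (z + of_real t)) has_field_derivative E_kernel t u + h u) (at (of_real u))"
      unfolding E_kernel_def h_def using nz
      by (auto intro!: derivative_eq_intros) (simp add: divide_simps power2_eq_square, simp add: algebra_simps)
    from has_vector_derivative_real_field[OF this]
    show "((\<lambda>u. - \<i> * E_kernel t u) has_vector_derivative E_kernel t u + h u) (at u within {r..s})"
      by (simp add: E_kernel_def)
  qed
  then have "integral {r..s} (\<lambda>u. E_kernel t u + h u) = \<i> * (E_kernel t r - E_kernel t s)"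
    by (simp add: integral_unique algebra_simps)
  moreover have "h integrable_on {r..s}" "E_kernel t integrable_on {r..s}"
    unfolding h_def using assms
    by (auto intro!: integrable_continuous_real continuous_intros continuous_on_E_kernel simp flip: of_real_add)
  ultimately show ?thesis
    unfolding h_def by (simp add: integral_add algebra_simps)
qed

lemma norm_integral_E_kernel_le:
  assumes "0 < t" "0 \<le> r" "r \<le> s"
  shows "norm (integral {r..s} (E_kernel t)) \<le> 2 / (r + t)"
proof -
  define R where "R = integral {r..s} (\<lambda>u. \<i> * E_kernel t u / of_real (u + t))"
  have "norm R \<le> integral {r..s} (\<lambda>u. 1 / (u + t)^2)"
    unfolding R_def
  proof (rule integral_norm_bound_integral)
    show "(\<lambda>u. \<i> * E_kernel t u / of_real (u + t)) integrable_on {r..s}"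
      using assms by (intro integrable_continuous_real continuous_intros continuous_on_E_kernel)
        (auto simp flip: of_real_add)
    show "(\<lambda>u. 1 / (u + t)^2) integrable_on {r..s}"
      using has_integral_inverse_square[of r t s] assms by auto
    fix u assume "u \<in> {r..s}"
    then have "u + t > 0" using assms by auto
    then show "norm (\<i> * E_kernel t u / of_real (u + t)) \<le> 1 / (u + t)^2"
      by (simp add: norm_mult norm_divide norm_E_kernel power2_eq_square del: of_real_add)
  qed
  also have "\<dots> = 1 / (r + t) - 1 / (s + t)"
    using has_integral_inverse_square[of r t s] assms by (simp add: integral_unique)
  finally have "norm R \<le> 1 / (r + t) - 1 / (s + t)" .
  moreover have "norm (\<i> * (E_kernel t r - E_kernel t s)) \<le> 1 / (r + t) + 1 / (s + t)"
    using norm_triangle_ineq4[of "E_kernel t r" "E_kernel t s"] norm_E_kernel[of r t] norm_E_kernel[of s t] assms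
    by (simp add: norm_mult)
  moreover have "2 / (r + t) = 1 / (r + t) + 1 / (r + t)" by simp
  ultimately show ?thesis
    unfolding integral_E_kernel_by_parts[OF assms, folded R_def]
    using norm_triangle_ineq4[of "\<i> * (E_kernel t r - E_kernel t s)" R] by linarith
qed

lemma integral_E_kernel_tendsto_Eint:
  assumes "0 < t"
  shows "((\<lambda>R. integral {0..R} (E_kernel t)) \<longlongrightarrow> Eint t) at_top"
  unfolding Eint_eq_Lim
proof (rule tendsto_integral_at_top_if_tail_bound)
  show "E_kernel t integrable_on {0..b}" for b
    using assms by (intro integrable_continuous_real continuous_on_E_kernel) auto
  show "norm (integral {r..s} (E_kernel t)) \<le> 2 / (r + t)" if "0 \<le> r" "r \<le> s" for r s
    using norm_integral_E_kernel_le assms that .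
  show "((\<lambda>r. 2 / (r + t)) \<longlongrightarrow> 0) at_top" by real_asymp
qed

lemma norm_E_kernel_diff_le:
  assumes "0 < a" "0 < b" "0 \<le> u"
  shows "norm (E_kernel a u - E_kernel b u) \<le> \<bar>a - b\<bar> / (u + min a b)^2"
proof -
  have "E_kernel a u - E_kernel b u = exp (\<i> * of_real u) * of_real (1 / (u + a) - 1 / (u + b))"
    by (simp add: E_kernel_def divide_inverse algebra_simps del: of_real_add)
  then have "norm (E_kernel a u - E_kernel b u) = \<bar>1 / (u + a) - 1 / (u + b)\<bar>"
    by (simp only: norm_mult norm_of_real norm_exp_i_times) simp
  also have "\<dots> = \<bar>a - b\<bar> / ((u + a) * (u + b))"
    using assms by (simp add: field_simps abs_divide abs_minus_commute)
  also have "\<dots> \<le> \<bar>a - b\<bar> / (u + min a b)^2"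
    using assms by (intro divide_left_mono) (auto simp: power2_eq_square intro!: mult_mono)
  finally show ?thesis .
qed

lemma norm_Eint_diff_le:
  assumes a: "0 < a" and b: "0 < b"
  shows "norm (Eint a - Eint b) \<le> \<bar>a - b\<bar> / min a b"
proof (rule Lim_norm_ubound)
  show "((\<lambda>R. integral {0..R} (E_kernel a) - integral {0..R} (E_kernel b)) \<longlongrightarrow> Eint a - Eint b) at_top"
    by (intro tendsto_diff integral_E_kernel_tendsto_Eint a b)
  define m where "m = min a b"
  have m: "0 < m" using a b by (simp add: m_def)
  show "\<forall>\<^sub>F R in at_top. norm (integral {0..R} (E_kernel a) - integral {0..R} (E_kernel b)) \<le> \<bar>a - b\<bar> / min a b"
    using eventually_ge_at_top[of 0]
  proof eventually_elim
    case (elim R)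
    have int: "E_kernel c integrable_on {0..R}" if "0 < c" for c
      using that by (intro integrable_continuous_real continuous_on_E_kernel) auto
    have sq: "((\<lambda>u. 1 / (u + m)^2) has_integral (1 / m - 1 / (R + m))) {0..R}"
      using has_integral_inverse_square[of 0 m R] m elim by simp
    have "norm (integral {0..R} (E_kernel a) - integral {0..R} (E_kernel b))
        = norm (integral {0..R} (\<lambda>u. E_kernel a u - E_kernel b u))"
      using a b by (simp add: integral_diff int)
    also have "\<dots> \<le> integral {0..R} (\<lambda>u. \<bar>a - b\<bar> * (1 / (u + m)^2))"
      using sq norm_E_kernel_diff_le[OF a b] a b
      by (intro integral_norm_bound_integral integrable_diff int integrable_on_mult_right)
        (auto simp: m_def)
    also have "\<dots> = \<bar>a - b\<bar> * (1 / m - 1 / (R + m))"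
      using has_integral_mult_right[OF sq] by (rule integral_unique)
    also have "\<dots> \<le> \<bar>a - b\<bar> / m"
      using m elim by (simp add: divide_inverse mult_left_mono)
    finally show ?case by (simp add: m_def)
  qed
qed simp

lemma isCont_Eint:
  assumes "0 < t"
  shows "isCont Eint t"
proof -
  have near: "\<forall>\<^sub>F a in at t. t / 2 < a"
    using assms by (intro order_tendstoD(1)[OF tendsto_ident_at]) simp
  have "((\<lambda>a. Eint a - Eint t) \<longlongrightarrow> 0) (at t)"
  proof (rule Lim_null_comparison)
    show "\<forall>\<^sub>F a in at t. norm (Eint a - Eint t) \<le> 2 / t * \<bar>a - t\<bar>"
      using near
    proof eventually_elim
      case (elim a)
      have "norm (Eint a - Eint t) \<le> \<bar>a - t\<bar> / min a t"
        using elim assms by (intro norm_Eint_diff_le) auto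
      also have "\<dots> \<le> \<bar>a - t\<bar> / (t / 2)"
        using elim assms by (intro divide_left_mono) auto
      finally show ?case by (simp add: mult.commute)
    qed
    show "((\<lambda>a. 2 / t * \<bar>a - t\<bar>) \<longlongrightarrow> 0) (at t)"
      by (intro tendsto_eq_intros) auto
  qed
  then show ?thesis by (simp add: isCont_def Lim_null[symmetric])
qed

section \<open>The series L as a Riemann sum of E\<close>

definition riemann_factor :: "real \<Rightarrow> complex" where
  "riemann_factor x = \<i> * of_real x / (1 - exp (- \<i> * of_real x))"

lemma one_minus_exp_neg_i_nonzero:
  assumes "0 < x" "x < pi"
  shows "1 - exp (- \<i> * of_real x) \<noteq> 0"
proof
  assume "1 - exp (- \<i> * of_real x) = 0"
  then have "Im (exp (- \<i> * of_real x)) = 0"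
    by (metis eq_iff_diff_eq_0 one_complex.sel(2))
  then have "sin x = 0" by (simp add: Im_exp)
  with sin_gt_zero[OF assms] show False by simp
qed

lemma riemann_factor_mult_integral_cis:
  assumes "0 < x" "x < pi"
  shows "riemann_factor x * integral {b - x..b} (\<lambda>u. exp (\<i> * of_real u)) = of_real x * exp (\<i> * of_real b)"
proof -
  have "integral {b - x..b} (\<lambda>u. exp (\<i> * of_real u)) = \<i> * (exp (\<i> * of_real (b - x)) - exp (\<i> * of_real b))"
    using has_integral_cis[of "b - x" b] assms by (simp add: integral_unique)
  also have "\<dots> = - \<i> * exp (\<i> * of_real b) * (1 - exp (- \<i> * of_real x))"
    by (simp add: algebra_simps exp_diff[symmetric] exp_add[symmetric])
  finally have integral_eq: "integral {b - x..b} (\<lambda>u. exp (\<i> * of_real u))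
      = - \<i> * exp (\<i> * of_real b) * (1 - exp (- \<i> * of_real x))" .
  show ?thesis
    unfolding integral_eq riemann_factor_def using one_minus_exp_neg_i_nonzero[OF assms]
    by (simp add: field_simps)
qed

lemma riemann_factor_tendsto_1: "(riemann_factor \<longlongrightarrow> 1) (at_right 0)"
proof -
  have "((\<lambda>y. \<i> / (of_real ((1 - cos y) / y) + \<i> * of_real (sin y / y)))
      \<longlongrightarrow> \<i> / (of_real 0 + \<i> * of_real 1)) (at_right (0::real))"
    by (intro tendsto_intros) (real_asymp, real_asymp, simp)
  moreover have "\<forall>\<^sub>F y in at_right 0.
      \<i> / (of_real ((1 - cos y) / y) + \<i> * of_real (sin y / y)) = riemann_factor y"
    using eventually_at_right_less[of 0]
  proof eventually_elim
    case (elim y)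
    have "1 - exp (- \<i> * of_real y) = of_real y * (of_real ((1 - cos y) / y) + \<i> * of_real (sin y / y))"
      using elim by (simp add: complex_eq_iff Re_exp Im_exp)
    then show ?case
      using elim by (simp add: riemann_factor_def)
  qed
  ultimately show ?thesis by (simp add: Lim_transform_eventually)
qed

lemma norm_cell_error_le:
  assumes "0 < t" "0 \<le> a" "a \<le> b"
  shows "norm (integral {a..b} (\<lambda>u. exp (\<i> * of_real u)) / of_real (b + t) - integral {a..b} (E_kernel t))
    \<le> (b - a) * (1 / (a + t) - 1 / (b + t))"
proof -
  let ?f = "\<lambda>u. exp (\<i> * of_real u) / of_real (b + t) - E_kernel t u"
  have int_cis: "(\<lambda>u. exp (\<i> * of_real u)) integrable_on {a..b}"
    by (intro integrable_continuous_real continuous_intros)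
  have int_E: "E_kernel t integrable_on {a..b}"
    using assms by (intro integrable_continuous_real continuous_on_E_kernel)
  have int: "?f integrable_on {a..b}"
    by (intro integrable_diff integrable_on_divide int_cis int_E)
  have bound: "norm (?f u) \<le> 1 / (a + t) - 1 / (b + t)" if "u \<in> {a..b}" for u
  proof -
    have "?f u = exp (\<i> * of_real u) * of_real (1 / (b + t) - 1 / (u + t))"
      by (simp add: E_kernel_def divide_inverse algebra_simps del: of_real_add)
    then have "norm (?f u) = \<bar>1 / (b + t) - 1 / (u + t)\<bar>"
      by (simp only: norm_mult norm_of_real norm_exp_i_times) simp
    also have "\<dots> = 1 / (u + t) - 1 / (b + t)"
      using that assms by (simp add: frac_le)
    also have "\<dots> \<le> 1 / (a + t) - 1 / (b + t)"
      using that assms by (simp add: frac_le)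
    finally show ?thesis .
  qed
  have "norm (integral {a..b} ?f) \<le> integral {a..b} (\<lambda>u. 1 / (a + t) - 1 / (b + t))"
    using bound by (intro integral_norm_bound_integral int) auto
  moreover have "integral {a..b} ?f = integral {a..b} (\<lambda>u. exp (\<i> * of_real u)) / of_real (b + t) - integral {a..b} (E_kernel t)"
    by (simp add: integral_diff integrable_on_divide int_cis int_E)
  ultimately show ?thesis using assms by (simp add: mult.commute)
qed

definition cell_error :: "real \<Rightarrow> real \<Rightarrow> nat \<Rightarrow> complex" where
  "cell_error t x k =
     integral {real k * x..real (Suc k) * x} (\<lambda>u. exp (\<i> * of_real u)) / of_real (real (Suc k) * x + t)
     - integral {real k * x..real (Suc k) * x} (E_kernel t)"

lemma summable_cell_error:
  assumes "0 < t" "0 < x"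
  shows "summable (cell_error t x)" "norm (\<Sum>k. cell_error t x k) \<le> x / t"
proof -
  define g where "g u = 1 / (u + t)" for u
  have bound: "norm (cell_error t x k) \<le> x * (g (real k * x) - g (real (Suc k) * x))" for k
    using norm_cell_error_le[OF assms(1), of "real k * x" "real (Suc k) * x"] assms
    unfolding cell_error_def g_def by (simp add: algebra_simps)
  have "(\<lambda>k. x * g (real k * x)) \<longlonglongrightarrow> 0"
    unfolding g_def using assms by real_asymp
  from telescope_sums'[OF this]
  have telescope: "(\<lambda>k. x * (g (real k * x) - g (real (Suc k) * x))) sums (x / t)"
    by (simp add: g_def right_diff_distrib)
  have norm_summable: "summable (\<lambda>k. norm (cell_error t x k))"
    using bound by (intro summable_comparison_test[OF _ sums_summable[OF telescope]]) auto
  then show "summable (cell_error t x)"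
    by (rule summable_norm_cancel)
  have "norm (\<Sum>k. cell_error t x k) \<le> (\<Sum>k. norm (cell_error t x k))"
    by (rule summable_norm[OF norm_summable])
  also have "\<dots> \<le> x / t"
    using suminf_le[OF bound norm_summable sums_summable[OF telescope]] telescope
    by (simp add: sums_iff)
  finally show "norm (\<Sum>k. cell_error t x k) \<le> x / t" .
qed

lemma Lser_eq_riemann_sum:
  assumes x: "0 < x" "x < pi" and \<mu>: "0 < \<mu>"
  shows "Lser x \<mu> = riemann_factor x * (Eint (\<mu> * x) + (\<Sum>k. cell_error (\<mu> * x) x k))"
proof -
  define t where "t = \<mu> * x"
  define a where "a k = exp (\<i> * of_real (real (Suc k) * x)) / of_real (real (Suc k) + \<mu>)" for k
  define J where "J k = integral {real k * x..real (Suc k) * x} (\<lambda>u. exp (\<i> * of_real u))" for k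
  have t: "0 < t" using x \<mu> by (simp add: t_def)
  have a_eq: "a k = riemann_factor x * (J k / of_real (real (Suc k) * x + t))" for k
  proof -
    have "real (Suc k) * x - x = real k * x" by (simp add: algebra_simps)
    then have cell: "of_real x * exp (\<i> * of_real (real (Suc k) * x)) = riemann_factor x * J k"
      unfolding J_def using riemann_factor_mult_integral_cis[OF x, of "real (Suc k) * x"] by simp
    have "a k = of_real x * exp (\<i> * of_real (real (Suc k) * x)) / of_real (x * (real (Suc k) + \<mu>))"
      unfolding a_def using x by simp
    moreover have "x * (real (Suc k) + \<mu>) = real (Suc k) * x + t"
      by (simp add: t_def algebra_simps)
    ultimately show ?thesis unfolding cell by (simp only: times_divide_eq_right)
  qed
  have partial_sums: "(\<Sum>k<N. a k)
      = riemann_factor x * (integral {0..real N * x} (E_kernel t) + (\<Sum>k<N. cell_error t x k))" for N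
  proof -
    have "(\<Sum>k<N. a k) = riemann_factor x * (\<Sum>k<N. J k / of_real (real (Suc k) * x + t))"
      by (simp add: a_eq sum_distrib_left)
    also have "(\<Sum>k<N. J k / of_real (real (Suc k) * x + t))
        = (\<Sum>k<N. integral {real k * x..real (Suc k) * x} (E_kernel t)) + (\<Sum>k<N. cell_error t x k)"
      by (simp add: cell_error_def J_def sum.distrib[symmetric])
    also have "(\<Sum>k<N. integral {real k * x..real (Suc k) * x} (E_kernel t)) = integral {0..real N * x} (E_kernel t)"
      using x t by (intro integral_sum_cells) (auto intro: integrable_continuous_real continuous_on_E_kernel)
    finally show ?thesis .
  qed
  have "filterlim (\<lambda>N. real N * x) at_top sequentially"
    using x by real_asymp
  then have "(\<lambda>N. integral {0..real N * x} (E_kernel t)) \<longlonglongrightarrow> Eint t"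
    by (rule filterlim_compose[OF integral_E_kernel_tendsto_Eint[OF t]])
  moreover have "(\<lambda>N. \<Sum>k<N. cell_error t x k) \<longlonglongrightarrow> (\<Sum>k. cell_error t x k)"
    using summable_sums[OF summable_cell_error(1)[OF t x(1)]] by (simp add: sums_def)
  ultimately have "a sums (riemann_factor x * (Eint t + (\<Sum>k. cell_error t x k)))"
    unfolding sums_def partial_sums by (intro tendsto_intros)
  then show ?thesis
    unfolding Lser_def a_def[abs_def] t_def by (rule sums_unique[symmetric])
qed

lemma norm_Lser_minus_Eint_le:
  assumes x: "0 < x" "x < pi" and \<mu>: "0 < \<mu>"
  shows "norm (Lser x \<mu> - riemann_factor x * Eint (\<mu> * x)) \<le> norm (riemann_factor x) / \<mu>"
proof -
  have "norm (\<Sum>k. cell_error (\<mu> * x) x k) \<le> 1 / \<mu>"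
    using summable_cell_error(2)[of "\<mu> * x" x] x \<mu> by simp
  then have "norm (riemann_factor x) * norm (\<Sum>k. cell_error (\<mu> * x) x k) \<le> norm (riemann_factor x) * (1 / \<mu>)"
    by (rule mult_left_mono) simp
  then show ?thesis
    by (simp add: Lser_eq_riemann_sum[OF assms] norm_mult algebra_simps)
qed

lemma tendsto_Lser_Eint:
  assumes "0 < \<nu>" and x: "filterlim x (at_right 0) F" and \<mu>: "filterlim \<mu> at_top F"
    and scale: "((\<lambda>n. \<mu> n * x n) \<longlongrightarrow> \<nu>) F"
  shows "((\<lambda>n. Lser (x n) (\<mu> n)) \<longlongrightarrow> Eint \<nu>) F"
proof -
  have factor: "((\<lambda>n. riemann_factor (x n)) \<longlongrightarrow> 1) F"
    by (rule filterlim_compose[OF riemann_factor_tendsto_1 x])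
  have "\<forall>\<^sub>F y in at_right 0. 0 < y \<and> y < pi"
    by (intro eventually_conj eventually_at_right_less order_tendstoD(2)[OF tendsto_ident_at]) simp
  then have "\<forall>\<^sub>F n in F. 0 < x n \<and> x n < pi"
    by (rule eventually_compose_filterlim[OF _ x])
  moreover have "\<forall>\<^sub>F n in F. 0 < \<mu> n"
    using \<mu> unfolding filterlim_at_top_dense by blast
  ultimately have "\<forall>\<^sub>F n in F. 0 < x n \<and> x n < pi \<and> 0 < \<mu> n"
    by eventually_elim auto
  then have "((\<lambda>n. Lser (x n) (\<mu> n) - riemann_factor (x n) * Eint (\<mu> n * x n)) \<longlongrightarrow> 0) F"
  proof (rule Lim_null_comparison[OF eventually_mono])
    show "norm (Lser (x n) (\<mu> n) - riemann_factor (x n) * Eint (\<mu> n * x n)) \<le> norm (riemann_factor (x n)) * inverse (\<mu> n)"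
      if "0 < x n \<and> x n < pi \<and> 0 < \<mu> n" for n
      using norm_Lser_minus_Eint_le[of "x n" "\<mu> n"] that by (simp add: divide_inverse)
    show "((\<lambda>n. norm (riemann_factor (x n)) * inverse (\<mu> n)) \<longlongrightarrow> 0) F"
      using tendsto_mult[OF tendsto_norm[OF factor] tendsto_inverse_0_at_top[OF \<mu>]] by simp
  qed
  moreover have "((\<lambda>n. riemann_factor (x n) * Eint (\<mu> n * x n)) \<longlongrightarrow> 1 * Eint \<nu>) F"
    by (intro tendsto_mult factor isCont_tendsto_compose[OF isCont_Eint[OF \<open>0 < \<nu>\<close>] scale])
  ultimately show ?thesis
    using tendsto_add by fastforce
qed

theorem proposition6:
  fixes \<nu> :: real
  assumes "\<nu> > 0"
  shows "(((\<lambda>\<mu>. Lser (\<nu> / \<mu>) \<mu>) \<longlongrightarrow> Eint \<nu>) at_top) \<and>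
    (((\<lambda>lam. Lbold (\<nu> / lam) lam) \<longlongrightarrow> Eint \<nu>) at_top) \<and>
    (((\<lambda>lam. Ssi (\<nu> / lam) lam) \<longlongrightarrow> Si \<nu>) at_top) \<and>
    (((\<lambda>lam. of_real lam * Eci (\<nu> / lam) lam) \<longlongrightarrow> \<i> * (1 - exp (\<i> * of_real \<nu>))) at_top)"
proof (intro conjI)
  show "((\<lambda>\<mu>. Lser (\<nu> / \<mu>) \<mu>) \<longlongrightarrow> Eint \<nu>) at_top"
    by (rule tendsto_Lser_Eint[OF assms _ filterlim_ident]) (use assms in real_asymp)+
  have "((\<lambda>lam. Lser (2 * (\<nu> / lam)) ((lam - 1) / 2)) \<longlongrightarrow> Eint \<nu>) at_top"
    by (rule tendsto_Lser_Eint[OF assms]) (use assms in real_asymp)+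
  moreover have "((\<lambda>lam. \<nu> / lam) \<longlongrightarrow> 0) at_top"
    by real_asymp
  then have "((\<lambda>lam. exp (- \<i> * of_real (\<nu> / lam))) \<longlongrightarrow> exp (- \<i> * of_real 0)) at_top"
    by (intro tendsto_intros)
  ultimately show "((\<lambda>lam. Lbold (\<nu> / lam) lam) \<longlongrightarrow> Eint \<nu>) at_top"
    unfolding Lbold_def using tendsto_mult by fastforce
  show "((\<lambda>lam. Ssi (\<nu> / lam) lam) \<longlongrightarrow> Si \<nu>) at_top"
    using Ssi_scaled_tendsto_Si[OF assms] .
  show "((\<lambda>lam. of_real lam * Eci (\<nu> / lam) lam) \<longlongrightarrow> \<i> * (1 - exp (\<i> * of_real \<nu>))) at_top"
    using Eci_scaled_tendsto[OF assms] .
qed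

end
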